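(* Let $\kappa=1$ and $F(R)=\bigl(h-\lambda R-\tfrac12R^2\bigr)^2-(R^2-\mu^2)(R-\ell)$. The set of parameters $(\lambda,\mu,\ell)\in\mathbb{R}^3$ for which there exist $h\in\mathbb{R}$ and $a>\max(|\mu|,\ell)$ such that $a$ is a root of $F$ of multiplicity four (i.e. $F(R)=\tfrac14(R-a)^4$, which forces $a=1-\lambda$) is the union of the three curves $$\mathrm{Cusp}_1=\{(\lambda,\,-(\lambda-\sqrt{2\lambda-1}),\,1-\lambda-\sqrt{2\lambda-1}):\ \tfrac12<\lambda<1\},$$ $$\mathrm{Cusp}_2=\{(\lambda,\,\lambda-\sqrt{2\lambda-1},\,1-\lambda-\sqrt{2\lambda-1}):\ \tfrac12<\lambda<1\},$$ $$\mathrm{Cusp}_3=\{(\tfrac12,\,\mu,\,\tfrac14+\mu^2):\ -\tfrac12<\mu<\tfrac12\}.$$ On $\mathrm{Cusp}_3$ one has $a=\tfrac12$ and $h=\tfrac18+\mu^2$. The endpoints of these curves are the degenerate Hamiltonian Hopf points: $\mathrm{Cusp}_2$ and $\mathrm{Cusp}_3$ end at $(\tfrac12,\tfrac12,\tfrac12)$, $\mathrm{Cusp}_1$ and $\mathrm{Cusp}_3$ end at $(\tfrac12,-\tfrac12,\tfrac12)$, and $\mathrm{Cusp}_1$ and $\mathrm{Cusp}_2$ end at $(1,0,-1)$.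
   Context: These parameter values are the cusp bifurcations of the reduced one-degree-of-freedom system with Hamiltonian $\mathcal{H}_\lambda=X+\lambda R+\tfrac12R^2$ on the reduced phase space $\mathcal{P}_{\mu\ell}=\{(R,X,Y): R\ge\max(|\mu|,\ell),\ X^2+Y^2=(R^2-\mu^2)(R-\ell)\}$. *)

theory Defs
  imports "HOL-Analysis.Analysis" "HOL-Computational_Algebra.Polynomial"
begin

definition Fpoly :: "real \<Rightarrow> real \<Rightarrow> real \<Rightarrow> real \<Rightarrow> real poly" where
  "Fpoly lam mu l h = [:h, -lam, -1/2:]^2 - [:-(mu^2), 0, 1:] * [:-l, 1:]"

definition cusp_set :: "(real \<times> real \<times> real) set" where
  "cusp_set = {(lam, mu, l). \<exists>h a. a > max \<bar>mu\<bar> l \<and> order a (Fpoly lam mu l h) = 4}"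

definition Cusp1 :: "(real \<times> real \<times> real) set" where
  "Cusp1 = {(lam, -(lam - sqrt (2*lam - 1)), 1 - lam - sqrt (2*lam - 1)) | lam. 1/2 < lam \<and> lam < 1}"

definition Cusp2 :: "(real \<times> real \<times> real) set" where
  "Cusp2 = {(lam, lam - sqrt (2*lam - 1), 1 - lam - sqrt (2*lam - 1)) | lam. 1/2 < lam \<and> lam < 1}"

definition Cusp3 :: "(real \<times> real \<times> real) set" where
  "Cusp3 = {(1/2, mu, 1/4 + mu^2) | mu. -1/2 < mu \<and> mu < 1/2}"

end

theory Submission
  imports Defs
begin

text \<open>Comparing coefficients with \<open>(R - a)\<^sup>4/4\<close>, the cubic term forces \<open>a = 1 - \<lambda>\<close> and the
  quadratic term fixes \<open>h\<close>; the two remaining equations then combine to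
  \<open>(1 - 2\<lambda>)((\<ell> - a)\<^sup>2 - (2\<lambda> - 1)) = 0\<close>. The factor \<open>\<lambda> = 1/2\<close> gives \<open>Cusp\<^sub>3\<close>; otherwise
  \<open>r = a - \<ell> > 0\<close> satisfies \<open>r\<^sup>2 = 2\<lambda> - 1\<close> and \<open>\<mu>\<^sup>2 = (\<lambda> - r)\<^sup>2\<close>, giving \<open>Cusp\<^sub>1\<close> and \<open>Cusp\<^sub>2\<close>.
  Each curve is an injective continuous image of an open interval that extends to the closed
  interval, so the points it is missing from its closure are the images of the two endpoints.\<close>

lemma order_eq_degree_iff:
  fixes p :: "'a::idom poly"
  assumes "p \<noteq> 0"
  shows "order a p = degree p \<longleftrightarrow> p = smult (lead_coeff p) ([:-a, 1:] ^ degree p)"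
proof
  assume "order a p = degree p"
  then have "[:-a, 1:] ^ degree p dvd p" by (metis order_1)
  then obtain r where r: "p = [:-a, 1:] ^ degree p * r" by (elim dvdE)
  with assms have "r \<noteq> 0" by auto
  with r have "degree p = degree p + degree r"
    by (metis degree_linear_power degree_mult_eq power_eq_0_iff pCons_eq_0_iff one_neq_zero)
  then obtain c where c: "r = [:c:]" by (metis add_cancel_left_right degree_eq_zeroE)
  have "lead_coeff p = lead_coeff ([:-a, 1:] ^ degree p * r)" using r by (rule arg_cong)
  also have "\<dots> = c" by (simp add: c lead_coeff_power)
  finally have "lead_coeff p = c" .
  with r c show "p = smult (lead_coeff p) ([:-a, 1:] ^ degree p)" by simp
next
  assume "p = smult (lead_coeff p) ([:-a, 1:] ^ degree p)"
  then show "order a p = degree p"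
    using assms by (metis leading_coeff_0_iff order_power_n_n order_smult)
qed

lemma Fpoly_eq:
  "Fpoly lam mu l h = [:h^2 - mu^2*l, mu^2 - 2*lam*h, lam^2 - h + l, lam - 1, 1/4:]"
  unfolding Fpoly_def by (simp add: power2_eq_square algebra_simps)

lemma smult_linear_power_4:
  "smult (1/4) ([:-a, 1:] ^ 4) = [:a^4/4, -(a^3), 3/2*a^2, -a, 1/4::real:]"
  by (simp add: eval_nat_numeral algebra_simps)

definition cusp_energy :: "real \<Rightarrow> real \<Rightarrow> real" where
  "cusp_energy lam l = lam^2 + l - 3/2*(1 - lam)^2"

lemma order_Fpoly_eq_4_iff:
  "order a (Fpoly lam mu l h) = 4 \<longleftrightarrow>
     a = 1 - lam \<and> h = cusp_energy lam l \<and> mu^2 = 2*lam*h - a^3 \<and> h^2 - mu^2*l = a^4/4"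
proof -
  let ?F = "Fpoly lam mu l h"
  have "?F \<noteq> 0" "degree ?F = 4" "lead_coeff ?F = 1/4"
    unfolding Fpoly_eq by simp_all
  then have "order a ?F = 4 \<longleftrightarrow> ?F = smult (1/4) ([:-a, 1:] ^ 4)"
    by (metis order_eq_degree_iff)
  also have "\<dots> \<longleftrightarrow> a = 1 - lam \<and> lam^2 - h + l = 3/2*a^2
      \<and> mu^2 - 2*lam*h = -(a^3) \<and> h^2 - mu^2*l = a^4/4"
    unfolding Fpoly_eq smult_linear_power_4 by auto
  finally show ?thesis
    unfolding cusp_energy_def by auto
qed

lemma mem_cusp_set_iff:
  "(lam, mu, l) \<in> cusp_set \<longleftrightarrow>
     1 - lam > max \<bar>mu\<bar> l \<and> mu^2 = 2*lam*cusp_energy lam l - (1 - lam)^3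
       \<and> cusp_energy lam l ^ 2 - mu^2*l = (1 - lam)^4/4"
  unfolding cusp_set_def order_Fpoly_eq_4_iff by auto

lemma cusp_energy_factorization:
  "cusp_energy lam l ^ 2 - (2*lam*cusp_energy lam l - (1 - lam)^3) * l - (1 - lam)^4/4
     = (1 - 2*lam) * ((l - (1 - lam))^2 - (2*lam - 1))"
  unfolding cusp_energy_def
  by (simp add: field_simps power2_eq_square power3_eq_cube power4_eq_xxxx)

lemma cusp_energy_on_branch:
  assumes "2*lam - 1 = r^2" "l = 1 - lam - r"
  shows "2*lam*cusp_energy lam l - (1 - lam)^3 = (lam - r)^2"
proof -
  have "lam = (1 + r^2)/2" using assms(1) by simp
  then show ?thesis unfolding assms(2) \<open>lam = _\<close> cusp_energy_def
    by (simp add: field_simps power2_eq_square power3_eq_cube)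
qed

lemma mem_cusp_set_imp_Cusp:
  assumes "(lam, mu, l) \<in> cusp_set"
  shows "(lam, mu, l) \<in> Cusp1 \<union> Cusp2 \<union> Cusp3"
proof -
  from assms have bound: "1 - lam > max \<bar>mu\<bar> l"
    and mu2: "mu^2 = 2*lam*cusp_energy lam l - (1 - lam)^3"
    and quartic: "cusp_energy lam l ^ 2 - mu^2*l = (1 - lam)^4/4"
    unfolding mem_cusp_set_iff by auto
  have "(1 - 2*lam) * ((l - (1 - lam))^2 - (2*lam - 1)) = 0"
    using quartic unfolding mu2 cusp_energy_factorization[symmetric] by simp
  then consider "lam = 1/2" | "(l - (1 - lam))^2 = 2*lam - 1" by force
  then show ?thesis
  proof cases
    case 1
    then have "l = 1/4 + mu^2"
      using mu2 unfolding 1 cusp_energy_def by (simp add: power2_eq_square power3_eq_cube)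
    with 1 bound show ?thesis unfolding Cusp3_def by auto
  next
    case 2
    define r where "r = 1 - lam - l"
    have "r > 0" using bound r_def by simp
    moreover have r2: "2*lam - 1 = r^2" using 2 r_def by (simp add: power2_commute)
    ultimately have sqrt_eq: "sqrt (2*lam - 1) = r" by simp
    have "mu^2 = (lam - r)^2"
      using mu2 cusp_energy_on_branch[OF r2] r_def by simp
    then have "mu = lam - sqrt (2*lam - 1) \<or> mu = -(lam - sqrt (2*lam - 1))"
      unfolding sqrt_eq by (simp add: power2_eq_iff)
    moreover have "l = 1 - lam - sqrt (2*lam - 1)" unfolding sqrt_eq r_def by simp
    moreover have "1/2 < lam" using r2 \<open>r > 0\<close> zero_less_power2[of r] by linarith
    moreover have "lam < 1" using bound by linarith
    ultimately show ?thesis unfolding Cusp1_def Cusp2_def by blast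
  qed
qed

lemma Cusp12_subset_cusp_set: "Cusp1 \<union> Cusp2 \<subseteq> cusp_set"
proof -
  have "(lam, mu, 1 - lam - r) \<in> cusp_set"
    if "1/2 < lam" "lam < 1" "r = sqrt (2*lam - 1)" "mu = lam - r \<or> mu = -(lam - r)" for lam mu r
  proof -
    have r2: "2*lam - 1 = r^2" and "0 < r" "r < 1" using that by auto
    have "lam - r = (1 - r)^2/2" using r2 by (simp add: power2_eq_square field_simps)
    then have "lam - r \<ge> 0" using zero_le_power2[of "1 - r"] by linarith
    then have "\<bar>mu\<bar> = lam - r" using that(4) by auto
    moreover have "(1 - lam) - (lam - r) = r*(1 - r)"
      using r2 by (simp add: power2_eq_square field_simps)
    moreover have "r*(1 - r) > 0" using \<open>0 < r\<close> \<open>r < 1\<close> by simp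
    ultimately have "1 - lam > \<bar>mu\<bar>" by linarith
    then have "1 - lam > max \<bar>mu\<bar> (1 - lam - r)" using \<open>0 < r\<close> by simp
    moreover have mu2: "mu^2 = 2*lam*cusp_energy lam (1 - lam - r) - (1 - lam)^3"
      using cusp_energy_on_branch[OF r2 refl] that(4) by (auto simp: power2_commute)
    moreover have "((1 - lam - r) - (1 - lam))^2 = 2*lam - 1" using r2 by simp
    then have "cusp_energy lam (1 - lam - r) ^ 2 - mu^2*(1 - lam - r) = (1 - lam)^4/4"
      using cusp_energy_factorization[of lam "1 - lam - r"] unfolding mu2[symmetric] by simp
    ultimately show ?thesis unfolding mem_cusp_set_iff by blast
  qed
  then show ?thesis unfolding Cusp1_def Cusp2_def by auto
qed

lemma Cusp3_subset_cusp_set: "Cusp3 \<subseteq> cusp_set"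
proof
  fix x
  assume "x \<in> Cusp3"
  then obtain mu where x: "x = (1/2, mu, 1/4 + mu^2)" and mu: "-1/2 < mu" "mu < 1/2"
    unfolding Cusp3_def by blast
  have "0 < (1/2 - mu) * (1/2 + mu)" using mu by (intro mult_pos_pos) auto
  then have "mu^2 < 1/4" by (simp add: power2_eq_square algebra_simps)
  with mu have "\<bar>mu\<bar> < 1/2" "1/4 + mu^2 < 1/2" by auto
  then have "1 - 1/2 > max \<bar>mu\<bar> (1/4 + mu^2)" unfolding max_less_iff_conj by simp
  moreover have "cusp_energy (1/2) (1/4 + mu^2) = 1/8 + mu^2"
    unfolding cusp_energy_def by (simp add: power2_eq_square)
  ultimately show "x \<in> cusp_set"
    unfolding x mem_cusp_set_iff
    by (simp add: algebra_simps power2_eq_square power3_eq_cube power4_eq_xxxx)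
qed

lemma closure_image_open_interval_diff:
  fixes g :: "real \<Rightarrow> 'b::t2_space"
  assumes "a < b" and "continuous_on {a..b} g" and "inj_on g {a..b}"
  shows "closure (g ` {a<..<b}) - g ` {a<..<b} = {g a, g b}"
proof -
  have "closed (g ` {a..b})"
    using assms(2) by (intro compact_imp_closed compact_continuous_image) auto
  then have "closure (g ` {a<..<b}) \<subseteq> g ` {a..b}"
    by (intro closure_minimal) auto
  moreover have "g ` closure {a<..<b} \<subseteq> closure (g ` {a<..<b})"
    using assms(2) by (intro image_closure_subset closure_subset) (auto simp: \<open>a < b\<close>)
  ultimately have "closure (g ` {a<..<b}) = g ` {a..b}"
    using \<open>a < b\<close> by auto
  moreover have "g ` {a..b} - g ` {a<..<b} = g ` ({a..b} - {a<..<b})"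
    using assms(3) by (intro inj_on_image_set_diff[symmetric]) auto
  moreover have "{a..b} - {a<..<b} = {a, b}" using \<open>a < b\<close> by auto
  ultimately show ?thesis by simp
qed

lemma closure_Cusp1_diff: "closure Cusp1 - Cusp1 = {(1/2, -1/2, 1/2), (1, 0, -1)}"
proof -
  have image: "Cusp1 = (\<lambda>t. (t, -(t - sqrt (2*t - 1)), 1 - t - sqrt (2*t - 1))) ` {1/2<..<1}"
    unfolding Cusp1_def by auto
  show ?thesis
    unfolding image by (subst closure_image_open_interval_diff)
      (auto intro!: continuous_intros simp: inj_on_def)
qed

lemma closure_Cusp2_diff: "closure Cusp2 - Cusp2 = {(1/2, 1/2, 1/2), (1, 0, -1)}"
proof -
  have image: "Cusp2 = (\<lambda>t. (t, t - sqrt (2*t - 1), 1 - t - sqrt (2*t - 1))) ` {1/2<..<1}"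
    unfolding Cusp2_def by auto
  show ?thesis
    unfolding image by (subst closure_image_open_interval_diff)
      (auto intro!: continuous_intros simp: inj_on_def)
qed

lemma closure_Cusp3_diff: "closure Cusp3 - Cusp3 = {(1/2, 1/2, 1/2), (1/2, -1/2, 1/2)}"
proof -
  have image: "Cusp3 = (\<lambda>m. (1/2 :: real, m, 1/4 + m^2)) ` {-1/2<..<1/2}"
    unfolding Cusp3_def by auto
  show ?thesis
    unfolding image by (subst closure_image_open_interval_diff)
      (auto intro!: continuous_intros simp: inj_on_def power2_eq_square)
qed

theorem mainTheorem7:
  shows "cusp_set = Cusp1 \<union> Cusp2 \<union> Cusp3
    \<and> (\<forall>lam mu l h a. (lam, mu, l) \<in> Cusp3 \<longrightarrow> a > max \<bar>mu\<bar> l \<longrightarrow>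
           order a (Fpoly lam mu l h) = 4 \<longrightarrow> a = 1/2 \<and> h = 1/8 + mu^2)
    \<and> closure Cusp1 - Cusp1 = {(1/2, -1/2, 1/2), (1, 0, -1)}
    \<and> closure Cusp2 - Cusp2 = {(1/2, 1/2, 1/2), (1, 0, -1)}
    \<and> closure Cusp3 - Cusp3 = {(1/2, 1/2, 1/2), (1/2, -1/2, 1/2)}"
proof (intro conjI allI impI)
  have "cusp_set \<subseteq> Cusp1 \<union> Cusp2 \<union> Cusp3"
    by (metis mem_cusp_set_imp_Cusp prod_cases3 subsetI)
  then show "cusp_set = Cusp1 \<union> Cusp2 \<union> Cusp3"
    using Cusp12_subset_cusp_set Cusp3_subset_cusp_set by blast
next
  fix lam mu l h a
  assume "(lam, mu, l) \<in> Cusp3" and "order a (Fpoly lam mu l h) = 4"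
  then have lam: "lam = 1/2" and "l = 1/4 + mu^2" "a = 1 - lam" "h = cusp_energy lam l"
    unfolding Cusp3_def order_Fpoly_eq_4_iff by auto
  then show "a = 1/2" "h = 1/8 + mu^2"
    unfolding lam cusp_energy_def by (simp_all add: power2_eq_square)
qed (fact closure_Cusp1_diff closure_Cusp2_diff closure_Cusp3_diff)+

end
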